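(* Let $K$ be a finite field of characteristic $2$, let $P=\begin{pmatrix}1&1\\0&1\end{pmatrix}$, $Q=\begin{pmatrix}1&0\\1&1\end{pmatrix}\in M_2(K)$, and define on $K\times K$ (column vectors) the operation $x\cdot y:=Q^{-1}x+Py$. Then $(K\times K,\cdot)$ is an indecomposable and irretractable cycle set, and for every $(x_1,x_2)^T\in K\times K$, $$\langle (x_1,x_2)^T\rangle=\begin{cases}\{(x_1,x_2)^T\} & \text{if } x_1=x_2,\\ \{(x_1,x_2)^T,(x_1,x_1)^T,(x_2,x_2)^T,(x_2,x_1)^T\} & \text{if } x_1\neq x_2.\end{cases}$$
   Context: A cycle set is a non-empty set $X$ with one operation $\cdot$ such that each $\sigma_x:y\mapsto x\cdot y$ is bijective and $(x\cdot y)\cdot(x\cdot z)=(y\cdot x)\cdot(y\cdot z)$ for all $x,y,z$. A sub-cycle set is a subset that is a cycle set under the restricted operation; $\langle x\rangle$ is the smallest sub-cycle set containing $x$. $X$ is indecomposable if it admits no partition into two nonempty sub-cycle sets (for finite $X$, equivalently the group generated by all $\sigma_x$ acts transitively). The retraction $\mathrm{Ret}(X)$ is the quotient of $X$ by $x\sim y\iff\sigma_x=\sigma_y$ with induced operation; a finite cycle set $X$ is irretractable if its absolute retraction $\mathrm{Ret}^m(X)$ ($m$ smallest with $\mathrm{Ret}^m(X)\cong\mathrm{Ret}^{m+1}(X)$) is isomorphic to $X$. *)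

theory Defs
  imports "HOL-Analysis.Analysis"
begin

definition cycle_set :: "'a set \<Rightarrow> ('a \<Rightarrow> 'a \<Rightarrow> 'a) \<Rightarrow> bool" where
  "cycle_set X op \<longleftrightarrow> X \<noteq> {}
     \<and> (\<forall>x\<in>X. bij_betw (op x) X X)
     \<and> (\<forall>x\<in>X. \<forall>y\<in>X. \<forall>z\<in>X. op (op x y) (op x z) = op (op y x) (op y z))"

definition sub_cycle_set :: "'a set \<Rightarrow> ('a \<Rightarrow> 'a \<Rightarrow> 'a) \<Rightarrow> 'a set \<Rightarrow> bool" where
  "sub_cycle_set X op Y \<longleftrightarrow> Y \<subseteq> X \<and> cycle_set Y op"

definition gen_sub :: "'a set \<Rightarrow> ('a \<Rightarrow> 'a \<Rightarrow> 'a) \<Rightarrow> 'a \<Rightarrow> 'a set" where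
  "gen_sub X op x = \<Inter>{Y. sub_cycle_set X op Y \<and> x \<in> Y}"

definition indecomposable :: "'a set \<Rightarrow> ('a \<Rightarrow> 'a \<Rightarrow> 'a) \<Rightarrow> bool" where
  "indecomposable X op \<longleftrightarrow>
     \<not> (\<exists>Y Z. sub_cycle_set X op Y \<and> sub_cycle_set X op Z \<and> Y \<noteq> {} \<and> Z \<noteq> {}
              \<and> Y \<inter> Z = {} \<and> Y \<union> Z = X)"

definition cs_iso :: "'a set \<times> ('a \<Rightarrow> 'a \<Rightarrow> 'a) \<Rightarrow> 'b set \<times> ('b \<Rightarrow> 'b \<Rightarrow> 'b) \<Rightarrow> bool" where
  "cs_iso A B \<longleftrightarrow> (\<exists>f. bij_betw f (fst A) (fst B)
      \<and> (\<forall>x\<in>fst A. \<forall>y\<in>fst A. f (snd A x y) = snd B (f x) (f y)))"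

text \<open>Retraction, realised on a set of chosen representatives of the classes of
  x ~ y iff sigma_x = sigma_y (isomorphic to the quotient cycle set).\<close>
definition ret_rep :: "'a set \<Rightarrow> ('a \<Rightarrow> 'a \<Rightarrow> 'a) \<Rightarrow> 'a \<Rightarrow> 'a" where
  "ret_rep X op x = (SOME y. y \<in> X \<and> (\<forall>z\<in>X. op y z = op x z))"

definition ret :: "'a set \<times> ('a \<Rightarrow> 'a \<Rightarrow> 'a) \<Rightarrow> 'a set \<times> ('a \<Rightarrow> 'a \<Rightarrow> 'a)" where
  "ret A = (ret_rep (fst A) (snd A) ` fst A, \<lambda>a b. ret_rep (fst A) (snd A) (snd A a b))"

definition irretractable :: "'a set \<Rightarrow> ('a \<Rightarrow> 'a \<Rightarrow> 'a) \<Rightarrow> bool" where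
  "irretractable X op \<longleftrightarrow> finite X \<and>
     (let m = (LEAST m. cs_iso ((ret ^^ m) (X, op)) ((ret ^^ Suc m) (X, op)))
      in cs_iso ((ret ^^ m) (X, op)) (X, op))"

definition matP :: "'a::field^2^2" where
  "matP = vector [vector [1, 1], vector [0, 1]]"

definition matQ :: "'a::field^2^2" where
  "matQ = vector [vector [1, 0], vector [1, 1]]"

definition ex_op :: "'a::field^2 \<Rightarrow> 'a^2 \<Rightarrow> 'a^2" where
  "ex_op x y = matrix_inv matQ *v x + matP *v y"

end

theory Submission
  imports Defs
begin

text \<open>In characteristic 2 we have \<open>Q\<inverse> = Q\<close>, so \<open>x \<cdot> y = (x\<^sub>1 + y\<^sub>1 + y\<^sub>2, x\<^sub>1 + x\<^sub>2 + y\<^sub>2)\<close>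
  and the cycle law is a coordinatewise identity. Since \<open>\<sigma>\<^sub>x(0) = Q x\<close>, the map \<open>x \<mapsto> \<sigma>\<^sub>x\<close> is
  injective, so the retraction is trivial. For fixed \<open>y\<close>, also \<open>x \<mapsto> x \<cdot> y\<close> is bijective; hence
  any \<open>z\<close> is of the form \<open>x \<cdot> y\<close>, and a decomposition \<open>Y \<union> Z\<close> with \<open>y \<in> Y\<close>, \<open>z \<in> Z\<close> is
  impossible whichever part contains \<open>x\<close>. Finally, a sum of three elements of \<open>{x\<^sub>1, x\<^sub>2}\<close> lies
  in \<open>{x\<^sub>1, x\<^sub>2}\<close>, so the four vectors with coordinates in \<open>{x\<^sub>1, x\<^sub>2}\<close> form a sub-cycle set,
  and each of them is obtained from \<open>x\<close> by at most two multiplications.\<close>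

lemma sub_cycle_set_op_closed:
  assumes "sub_cycle_set X op Y" "a \<in> Y" "b \<in> Y"
  shows "op a b \<in> Y"
  using assms unfolding sub_cycle_set_def cycle_set_def by (meson bij_betwE)

lemma sub_cycle_setI:
  assumes X: "cycle_set X op" and "S \<subseteq> X" "finite S" "S \<noteq> {}"
    and closed: "\<And>a b. a \<in> S \<Longrightarrow> b \<in> S \<Longrightarrow> op a b \<in> S"
  shows "sub_cycle_set X op S"
  unfolding sub_cycle_set_def cycle_set_def
proof (intro conjI ballI)
  fix a assume "a \<in> S"
  have "inj_on (op a) S"
    using X \<open>a \<in> S\<close> \<open>S \<subseteq> X\<close> unfolding cycle_set_def by (meson bij_betw_imp_inj_on inj_on_subset subsetD)
  moreover have "op a ` S = S"
    using \<open>finite S\<close> closed \<open>a \<in> S\<close> \<open>inj_on (op a) S\<close> by (intro endo_inj_surj) auto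
  ultimately show "bij_betw (op a) S S"
    unfolding bij_betw_def by blast
next
  fix a b c assume "a \<in> S" "b \<in> S" "c \<in> S"
  then show "op (op a b) (op a c) = op (op b a) (op b c)"
    using X \<open>S \<subseteq> X\<close> unfolding cycle_set_def by blast
qed (use assms in auto)

lemma gen_sub_eqI:
  assumes "sub_cycle_set X op S" "x \<in> S"
    and "\<And>Y. sub_cycle_set X op Y \<Longrightarrow> x \<in> Y \<Longrightarrow> S \<subseteq> Y"
  shows "gen_sub X op x = S"
  unfolding gen_sub_def using assms by blast

lemma indecomposableI:
  assumes X: "cycle_set X op"
    and solvable: "\<And>y z. y \<in> X \<Longrightarrow> z \<in> X \<Longrightarrow> \<exists>x\<in>X. op x y = z"
  shows "indecomposable X op"
  unfolding indecomposable_def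
proof (rule notI, elim exE conjE)
  fix Y Z
  assume Y: "sub_cycle_set X op Y" and Z: "sub_cycle_set X op Z"
    and "Y \<noteq> {}" "Z \<noteq> {}" and disj: "Y \<inter> Z = {}" and un: "Y \<union> Z = X"
  obtain y z where "y \<in> Y" "z \<in> Z"
    using \<open>Y \<noteq> {}\<close> \<open>Z \<noteq> {}\<close> by blast
  then obtain x where "x \<in> X" and xyz: "op x y = z"
    using solvable un by blast
  show False
  proof (cases "x \<in> Y")
    case True
    then show False
      using sub_cycle_set_op_closed[OF Y True \<open>y \<in> Y\<close>] xyz \<open>z \<in> Z\<close> disj by blast
  next
    case False
    then have "x \<in> Z"
      using \<open>x \<in> X\<close> un by blast
    then obtain z' where "z' \<in> Z" "op x z' = z"
      using Z \<open>z \<in> Z\<close> unfolding sub_cycle_set_def cycle_set_def by (metis bij_betw_imp_surj_on imageE)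
    moreover have "inj_on (op x) X"
      using X \<open>x \<in> X\<close> unfolding cycle_set_def by (metis bij_betw_def)
    ultimately have "z' = y"
      using xyz \<open>y \<in> Y\<close> un by (metis UnCI inj_on_contraD)
    then show False
      using \<open>z' \<in> Z\<close> \<open>y \<in> Y\<close> disj by blast
  qed
qed

lemma ret_rep_eq_self:
  assumes "x \<in> X" and "\<And>y. y \<in> X \<Longrightarrow> \<forall>z\<in>X. op y z = op x z \<Longrightarrow> y = x"
  shows "ret_rep X op x = x"
  unfolding ret_rep_def using assms by (intro some_equality) auto

text \<open>With \<open>m = 0\<close> in the definition of irretractability, it suffices that \<open>X\<close> is isomorphic to
  its retraction.\<close>
lemma irretractableI:
  assumes "finite X"
    and sigma_inj: "\<And>x y. x \<in> X \<Longrightarrow> y \<in> X \<Longrightarrow> \<forall>z\<in>X. op x z = op y z \<Longrightarrow> x = y"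
  shows "irretractable X op"
proof -
  have rep: "ret_rep X op x = x" if "x \<in> X" for x
    using that sigma_inj by (intro ret_rep_eq_self) auto
  have "bij_betw (ret_rep X op) X (ret_rep X op ` X)"
    using rep by (simp add: bij_betw_def inj_on_def)
  then have "cs_iso (X, op) (ret (X, op))"
    unfolding cs_iso_def ret_def using rep by auto
  then have "(LEAST m. cs_iso ((ret ^^ m) (X, op)) ((ret ^^ Suc m) (X, op))) = 0"
    by simp
  moreover have "cs_iso (X, op) (X, op)"
    unfolding cs_iso_def by (metis bij_betw_id fst_conv id_apply snd_conv)
  ultimately show ?thesis
    unfolding irretractable_def using \<open>finite X\<close> by simp
qed

lemma CHAR_2_add_self:
  assumes "CHAR('a::ring_1) = 2"
  shows "(x::'a) + x = 0"
  by (metis assms uminus_CHAR_2 add.right_inverse)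

lemma vec2_eq_iff: "(v::'a^2) = w \<longleftrightarrow> v$1 = w$1 \<and> v$2 = w$2"
  by (simp add: vec_eq_iff forall_2)

lemma matrix_inv_matQ:
  assumes "CHAR('a::field) = 2"
  shows "matrix_inv (matQ::'a^2^2) = matQ"
proof -
  have QQ: "(matQ::'a^2^2) ** matQ = mat 1"
    by (simp add: matQ_def vec2_eq_iff matrix_matrix_mult_def sum_2 mat_def CHAR_2_add_self[OF assms])
  let ?Q = "matQ :: 'a^2^2"
  have "?Q ** matrix_inv ?Q = mat 1 \<and> matrix_inv ?Q ** ?Q = mat 1"
    unfolding matrix_inv_def by (rule someI[of _ ?Q]) (simp add: QQ)
  then show ?thesis
    by (metis QQ matrix_mul_assoc matrix_mul_rid matrix_mul_lid)
qed

context
  assumes char_2: "CHAR('a::field) = 2"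
begin

lemma ex_op_nth:
  "(ex_op x y :: 'a^2) $ 1 = x$1 + y$1 + y$2"
  "(ex_op x y :: 'a^2) $ 2 = x$1 + x$2 + y$2"
  unfolding ex_op_def matrix_inv_matQ[OF char_2]
  by (simp_all add: matrix_vector_mult_def sum_2 matQ_def matP_def)

lemma add_self_cancel: "(x::'a) + (x + y) = y"
  by (metis add.assoc add_0 CHAR_2_add_self[OF char_2])

lemmas ex_op_simps = vec2_eq_iff ex_op_nth add_ac CHAR_2_add_self[OF char_2] add_self_cancel

lemma ex_op_cycle: "ex_op (ex_op x y) (ex_op x z) = ex_op (ex_op y x) (ex_op (y::'a^2) z)"
  by (simp add: ex_op_simps)

lemma bij_ex_op: "bij (ex_op (x::'a^2))"
proof (rule bij_betwI')
  fix w :: "'a^2"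
  let ?y = "vector [w$1 - x$1 - (w$2 - x$1 - x$2), w$2 - x$1 - x$2] :: 'a^2"
  have "w = ex_op x ?y"
    by (simp add: vec2_eq_iff ex_op_nth)
  then show "\<exists>y\<in>UNIV. w = ex_op x y"
    by blast
qed (auto simp: vec2_eq_iff ex_op_nth)

lemma ex_op_left_solvable: "\<exists>x::'a^2. ex_op x y = z"
proof -
  let ?x = "vector [z$1 - y$1 - y$2, z$2 - y$2 - (z$1 - y$1 - y$2)] :: 'a^2"
  have "ex_op ?x y = z"
    by (simp add: vec2_eq_iff ex_op_nth)
  then show ?thesis
    by blast
qed

lemma cycle_set_ex_op: "cycle_set (UNIV :: ('a^2) set) ex_op"
  unfolding cycle_set_def using bij_ex_op ex_op_cycle by auto

lemma ex_op_sigma_inj: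
  assumes "\<forall>z. ex_op x z = ex_op y (z::'a^2)"
  shows "x = y"
proof -
  have "ex_op x 0 = ex_op y 0"
    using assms by blast
  then show ?thesis
    by (auto simp: vec2_eq_iff ex_op_nth)
qed

lemma gen_sub_ex_op:
  fixes x :: "'a^2"
  defines "p \<equiv> x$1" and "q \<equiv> x$2"
  shows "gen_sub UNIV ex_op x = {x, vector [p, p], vector [q, q], vector [q, p]}"
    (is "_ = ?S")
proof (rule gen_sub_eqI)
  have S: "?S = {v. v$1 \<in> {p, q} \<and> v$2 \<in> {p, q}}"
    unfolding p_def q_def by (auto simp: vec2_eq_iff)
  have sum3: "u + v + w \<in> {p, q}" if "u \<in> {p, q}" "v \<in> {p, q}" "w \<in> {p, q}" for u v w :: 'a
    using that by (auto simp: add_ac CHAR_2_add_self[OF char_2] add_self_cancel)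
  have "ex_op a b \<in> ?S" if "a \<in> ?S" "b \<in> ?S" for a b
    using that sum3 unfolding S by (simp add: ex_op_nth)
  then show "sub_cycle_set UNIV ex_op ?S"
    by (intro sub_cycle_setI cycle_set_ex_op) auto
  show "x \<in> ?S"
    by simp
next
  fix Y assume Y: "sub_cycle_set UNIV ex_op Y" and "x \<in> Y"
  have qp: "vector [q, p] = ex_op x x"
    and qq: "vector [q, q] = ex_op x (vector [q, p])"
    and pp: "vector [p, p] = ex_op (vector [q, p]) x"
    by (simp_all add: p_def q_def ex_op_simps)
  have "vector [q, p] \<in> Y"
    unfolding qp by (rule sub_cycle_set_op_closed[OF Y \<open>x \<in> Y\<close> \<open>x \<in> Y\<close>])
  moreover have "vector [q, q] \<in> Y" "vector [p, p] \<in> Y"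
    unfolding qq pp using Y \<open>x \<in> Y\<close> calculation by (auto intro: sub_cycle_set_op_closed)
  ultimately show "?S \<subseteq> Y"
    using \<open>x \<in> Y\<close> by simp
qed

end

theorem mainTheorem9:
  assumes "CHAR('a::{field,finite}) = 2"
  shows "cycle_set (UNIV :: ('a^2) set) ex_op
       \<and> indecomposable (UNIV :: ('a^2) set) ex_op
       \<and> irretractable (UNIV :: ('a^2) set) ex_op
       \<and> (\<forall>x :: 'a^2. gen_sub UNIV ex_op x =
            (if x$1 = x$2 then {x}
             else {x, vector [x$1, x$1], vector [x$2, x$2], vector [x$2, x$1]}))"
proof (intro conjI allI)
  show "cycle_set (UNIV :: ('a^2) set) ex_op"
    using cycle_set_ex_op[OF assms] .
  then show "indecomposable (UNIV :: ('a^2) set) ex_op"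
    using ex_op_left_solvable[OF assms] by (intro indecomposableI) auto
  show "irretractable (UNIV :: ('a^2) set) ex_op"
    using ex_op_sigma_inj[OF assms] by (intro irretractableI) auto
  show "gen_sub UNIV ex_op x =
      (if x$1 = x$2 then {x} else {x, vector [x$1, x$1], vector [x$2, x$2], vector [x$2, x$1]})"
    for x :: "'a^2"
  proof -
    have "{x, vector [x$1, x$1], vector [x$2, x$2], vector [x$2, x$1]} = {x}" if "x$1 = x$2"
      using that by (auto simp: vec2_eq_iff)
    then show ?thesis
      using gen_sub_ex_op[OF assms] by simp
  qed
qed

end
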